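(* Assume Hypothesis (H1) and let $n\ge2$. Put $K_0:=(H_0-E_0)^{-1}\bar P_0$ and $E_1:=\langle\psi_0,V\psi_0\rangle$, and define recursively, for $m=1,\dots,n-2$, $$K_m:=\sum_{j=1}^{m}K_{j-1}\,(E_{m+1-j}-\delta_{jm}V)\,K_0,$$ and, for $m=2,\dots,n$, $E_m:=-\langle V\psi_0,K_{m-2}V\psi_0\rangle$, where it is assumed that $\bar P_0V\psi_0\in{\rm dom}(K_l)$ for $l=0,\dots,n-2$ (i.e. all operator products applied to $\bar P_0V\psi_0$ are well defined). Then for all $m=1,\dots,n$ $$\lim_{\lambda\downarrow0}\lambda^{-m}\Big(E(\lambda)-\sum_{k=0}^{m}E_k\lambda^k\Big)=0 .$$
   Context: Let $H_0$ and $V$ be self-adjoint operators in a Hilbert space $\mathcal H$. Hypothesis (H1): $H_0$ is bounded from below and $V$ is $H_0$-bounded; there is $\lambda_0>0$ such that for every $\lambda\in[0,\lambda_0]$ there is a simple eigenvalue $E(\lambda)$ of $H(\lambda)=H_0+\lambda V$ with eigenvector $\psi(\lambda)$; moreover $\lim_{\lambda\to0}\psi(\lambda)=\psi(0)\neq0$, $\lim_{\lambda\to0}E(\lambda)=E(0)$, and $\langle\psi(0),\psi(\lambda)\rangle=1$ for all $\lambda\in[0,\lambda_0]$. Write $E_0=E(0)$, $\psi_0=\psi(0)$, $P_0$ the orthogonal projection onto $\ker(H_0-E_0)=\mathbb C\psi_0$, $\bar P_0=1-P_0$. The operator $(H_0-E_0)^{-1}\bar P_0$ maps a vector $\xi$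 to the unique $\chi\in{\rm dom}(H_0)\cap\bar P_0\mathcal H$ with $(H_0-E_0)\chi=\bar P_0\xi$, on the set of $\xi$ for which such $\chi$ exists. $\delta_{ij}$ is the Kronecker delta. *)

theory Defs
  imports "HOL-Analysis.Analysis"
begin

text \<open>HOL-Analysis has no complex inner product spaces, so we introduce the class of
complex Hilbert spaces: a real Banach space with a compatible complex scalar
multiplication and a complex inner product (conjugate linear in the first,
linear in the second argument) inducing the norm.\<close>

class complex_hilbert = banach +
  fixes cscale :: "complex \<Rightarrow> 'a \<Rightarrow> 'a"
    and cinner :: "'a \<Rightarrow> 'a \<Rightarrow> complex"
  assumes cscale_add_left: "cscale (a + b) x = cscale a x + cscale b x"
    and cscale_add_right: "cscale a (x + y) = cscale a x + cscale a y"
    and cscale_cscale: "cscale a (cscale b x) = cscale (a * b) x"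
    and cscale_one: "cscale 1 x = x"
    and cscale_of_real: "cscale (complex_of_real r) x = r *\<^sub>R x"
    and cinner_add_right: "cinner x (y + z) = cinner x y + cinner x z"
    and cinner_cscale_right: "cinner x (cscale c y) = c * cinner x y"
    and cinner_commute: "cinner y x = cnj (cinner x y)"
    and cinner_norm: "cinner x x = complex_of_real ((norm x)\<^sup>2)"

text \<open>An operator with domain D is given by the pair (D, A); A is only relevant on D.\<close>

definition linear_on :: "'a::complex_hilbert set \<Rightarrow> ('a \<Rightarrow> 'a) \<Rightarrow> bool" where
  "linear_on D A \<longleftrightarrow> 0 \<in> D \<and>
     (\<forall>x\<in>D. \<forall>y\<in>D. \<forall>c. x + cscale c y \<in> D \<and> A (x + cscale c y) = A x + cscale c (A y))"

text \<open>Self-adjointness: densely defined linear operator with A* = A, i.e. the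
adjoint relation  (y, z) with  <y, A x> = <z, x> for all x in D  is exactly the graph of A.\<close>

definition self_adjoint :: "'a::complex_hilbert set \<Rightarrow> ('a \<Rightarrow> 'a) \<Rightarrow> bool" where
  "self_adjoint D A \<longleftrightarrow> linear_on D A \<and> closure D = UNIV \<and>
     (\<forall>y z. (\<forall>x\<in>D. cinner y (A x) = cinner z x) \<longleftrightarrow> (y \<in> D \<and> z = A y))"

definition bounded_below :: "'a::complex_hilbert set \<Rightarrow> ('a \<Rightarrow> 'a) \<Rightarrow> bool" where
  "bounded_below D A \<longleftrightarrow> (\<exists>c::real. \<forall>x\<in>D. Re (cinner x (A x)) \<ge> c * (norm x)\<^sup>2)"

definition relatively_bounded ::
  "'a::complex_hilbert set \<Rightarrow> ('a \<Rightarrow> 'a) \<Rightarrow> 'a set \<Rightarrow> ('a \<Rightarrow> 'a) \<Rightarrow> bool" where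
  "relatively_bounded DV V D0 H0 \<longleftrightarrow> D0 \<subseteq> DV \<and>
     (\<exists>a b::real. \<forall>x\<in>D0. norm (V x) \<le> a * norm (H0 x) + b * norm x)"

definition simple_eigen :: "'a::complex_hilbert set \<Rightarrow> ('a \<Rightarrow> 'a) \<Rightarrow> real \<Rightarrow> 'a \<Rightarrow> bool" where
  "simple_eigen D A E psi \<longleftrightarrow> psi \<in> D \<and> psi \<noteq> 0 \<and> A psi = E *\<^sub>R psi \<and>
     {x \<in> D. A x = E *\<^sub>R x} = range (\<lambda>c. cscale c psi)"

definition orth_proj :: "'a::complex_hilbert set \<Rightarrow> 'a \<Rightarrow> 'a" where
  "orth_proj S x = (THE y. y \<in> S \<and> (\<forall>z\<in>S. cinner z (x - y) = 0))"

type_synonym 'a pop = "'a \<Rightarrow> 'a option"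

definition pcomp :: "'a pop \<Rightarrow> 'a pop \<Rightarrow> 'a pop" where
  "pcomp A B x = Option.bind (B x) A"

definition psum :: "(nat \<Rightarrow> 'a::ab_group_add pop) \<Rightarrow> nat \<Rightarrow> 'a pop" where
  "psum F m x = (if \<forall>j\<in>{1..m}. F j x \<noteq> None
                 then Some (\<Sum>j=1..m. the (F j x)) else None)"

text \<open>The reduced resolvent (H0 - E0)^{-1} Pbar0: maps xi to the unique chi in
dom(H0) \<inter> Pbar0 H with (H0 - E0) chi = Pbar0 xi, where such chi exists.\<close>

definition reduced_resolvent ::
  "'a::complex_hilbert set \<Rightarrow> ('a \<Rightarrow> 'a) \<Rightarrow> real \<Rightarrow> ('a \<Rightarrow> 'a) \<Rightarrow> 'a pop" where
  "reduced_resolvent D0 H0 E0 Pbar xi =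
     (if \<exists>!chi. chi \<in> D0 \<and> Pbar chi = chi \<and> H0 chi - E0 *\<^sub>R chi = Pbar xi
      then Some (THE chi. chi \<in> D0 \<and> Pbar chi = chi \<and> H0 chi - E0 *\<^sub>R chi = Pbar xi)
      else None)"

text \<open>The operator  e - d V  (d = 1 or 0) with domain dom V if d = 1, the whole space if d = 0.\<close>

definition shift_op :: "'a::complex_hilbert set \<Rightarrow> ('a \<Rightarrow> 'a) \<Rightarrow> complex \<Rightarrow> bool \<Rightarrow> 'a pop" where
  "shift_op DV V e d x =
     (if d then (if x \<in> DV then Some (cscale e x - V x) else None) else Some (cscale e x))"

end

theory Submission
  imports Defs "HOL-Library.Landau_Symbols"
begin

text \<open>Pairing the eigenvalue equation \<open>(H0 + \<lambda> V) \<psi>(\<lambda>) = E(\<lambda>) \<psi>(\<lambda>)\<close> with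
  \<open>\<psi>0\<close> and using \<open>\<langle>\<psi>0, \<psi>(\<lambda>)\<rangle> = 1\<close> gives
  \<open>E(\<lambda>) - E0 = \<lambda> \<langle>V \<psi>0, \<psi>(\<lambda>)\<rangle>\<close>, so the expansion of the energy to order \<open>p\<close>
  is the expansion of the overlap \<open>\<langle>V \<psi>0, \<psi>(\<lambda>)\<rangle>\<close> to order \<open>p - 1\<close>.
  For a vector \<open>z\<close> with \<open>w = K0 z\<close>, pairing \<open>(H0 - E0) w = Pbar0 z\<close> with \<open>\<psi>(\<lambda>)\<close> gives
  \<open>\<langle>z, \<psi>(\<lambda>)\<rangle> = \<langle>z, \<psi>0\<rangle> + (E(\<lambda>) - E0) \<langle>w, \<psi>(\<lambda>)\<rangle> - \<lambda> \<langle>V w, \<psi>(\<lambda>)\<rangle>\<close>.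
  Inserting the energy expansion and expanding the overlaps of \<open>E1 w - V w\<close> and of \<open>Ek w\<close>
  to lower orders, the recursion defining the \<open>Km\<close> collects the coefficients into
  \<open>\<langle>z, \<psi>(\<lambda>)\<rangle> = \<langle>z, \<psi>0\<rangle> - \<Sum>m<p. \<lambda>^(m+1) \<langle>Km z, V \<psi>0\<rangle> + o(\<lambda>^p)\<close>.
  Both expansions therefore follow by a joint induction on the order; for \<open>z = V \<psi>0\<close> the
  coefficients are the conjugates of \<open>-E(m+2)\<close>.\<close>

lemma cscale_zero_left [simp]: "cscale 0 x = 0"
  using cscale_of_real[of 0 x] by simp

lemma cinner_zero_right [simp]: "cinner x 0 = 0"
proof -
  have "cinner x 0 + cinner x 0 = cinner x 0 + 0" using cinner_add_right[of x 0 0] by simp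
  thus ?thesis by simp
qed

lemma cinner_zero_left [simp]: "cinner 0 x = 0"
  using cinner_commute[of 0 x] by simp

lemma cinner_add_left: "cinner (x + y) z = cinner x z + cinner y z"
  using cinner_commute[of "x + y" z] cinner_commute[of x z] cinner_commute[of y z]
    cinner_add_right[of z x y]
  by simp

lemma cinner_cscale_left: "cinner (cscale c x) y = cnj c * cinner x y"
  using cinner_commute[of "cscale c x" y] cinner_commute[of x y] cinner_cscale_right[of y c x]
  by simp

lemma cinner_scaleR_right: "cinner x (r *\<^sub>R y) = complex_of_real r * cinner x y"
  using cinner_cscale_right[of x "complex_of_real r" y] cscale_of_real[of r y] by simp

lemma cinner_scaleR_left: "cinner (r *\<^sub>R x) y = complex_of_real r * cinner x y"
  using cinner_cscale_left[of "complex_of_real r" x y] cscale_of_real[of r x] by simp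

lemma cinner_diff_right: "cinner x (y - z) = cinner x y - cinner x z"
  using cinner_add_right[of x y "- z"] cinner_scaleR_right[of x "- 1" z] by simp

lemma cinner_diff_left: "cinner (x - y) z = cinner x z - cinner y z"
  using cinner_add_left[of x "- y" z] cinner_scaleR_left[of "- 1" y z] by simp

lemma cinner_sum_left: "cinner (\<Sum>j\<in>A. f j) z = (\<Sum>j\<in>A. cinner (f j) z)"
  by (induction A rule: infinite_finite_induct) (auto simp: cinner_add_left)

lemma norm_cinner_le: "cmod (cinner x y) \<le> norm x * norm y"
proof (cases "x = 0")
  case True
  then show ?thesis by simp
next
  case False
  define a where "a = cinner x y"
  define N where "N = (norm x)\<^sup>2"
  have N: "N > 0" using False by (simp add: N_def)
  define z where "z = y - cscale (a / complex_of_real N) x"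
  have xx: "cinner x x = complex_of_real N" by (simp add: N_def cinner_norm)
  have "cinner x z = 0"
    using N by (simp add: z_def cinner_diff_right cinner_cscale_right xx a_def)
  then have "cinner z z = cinner y z"
    by (simp add: z_def cinner_diff_left cinner_cscale_left)
  also have "\<dots> = cinner y y - a / complex_of_real N * cnj a"
    by (simp add: z_def cinner_diff_right cinner_cscale_right a_def cinner_commute[of y x])
  also have "a / complex_of_real N * cnj a = complex_of_real ((cmod a)\<^sup>2 / N)"
    using complex_norm_square[of a] by simp
  finally have "(norm z)\<^sup>2 = (norm y)\<^sup>2 - (cmod a)\<^sup>2 / N"
    by (simp only: cinner_norm of_real_diff[symmetric] of_real_eq_iff)
  then have "(cmod a)\<^sup>2 / N \<le> (norm y)\<^sup>2" using zero_le_power2[of "norm z"] by linarith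
  then have "(cmod a)\<^sup>2 \<le> N * (norm y)\<^sup>2" using N by (simp add: divide_le_eq mult.commute)
  then have "(cmod a)\<^sup>2 \<le> (norm x * norm y)\<^sup>2" by (simp add: N_def power_mult_distrib)
  then show ?thesis unfolding a_def by (rule power2_le_imp_le) simp
qed

lemma self_adjoint_symmetric:
  assumes "self_adjoint D A" "x \<in> D" "y \<in> D"
  shows "cinner y (A x) = cinner (A y) x"
  using assms unfolding self_adjoint_def by blast

lemma tendsto_imp_diff_smallo_1:
  fixes f :: "'a \<Rightarrow> 'b::real_normed_field"
  assumes "(f \<longlongrightarrow> c) F"
  shows "(\<lambda>x. f x - c) \<in> o[F](\<lambda>_. 1)"
  by (rule smalloI_tendsto) (use tendsto_diff[OF assms tendsto_const[of c]] in simp_all)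

lemma smallo_cnj: "f \<in> o[F](g) \<Longrightarrow> (\<lambda>x. cnj (f x)) \<in> o[F](g)"
  by (intro landau_o.smallI) (simp add: landau_o.smallD)

lemma smallo_mult_tendsto:
  fixes f h :: "'a \<Rightarrow> 'b::real_normed_field"
  assumes "f \<in> o[F](g)" and "(h \<longlongrightarrow> c) F"
  shows "(\<lambda>x. h x * f x) \<in> o[F](g)"
proof -
  have "h \<in> O[F](\<lambda>_. 1)" by (rule bigoI_tendsto[where c = c]) (use assms(2) in simp_all)
  from landau_o.big_small_mult[OF this assms(1)] show ?thesis by simp
qed

lemma smallo_power_mult:
  fixes f g :: "'a \<Rightarrow> 'b::real_normed_field"
  assumes "f \<in> o[F](\<lambda>x. g x ^ p)"
  shows "(\<lambda>x. g x ^ k * f x) \<in> o[F](\<lambda>x. g x ^ (p + k))"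
  using landau_o.small.mult_left[OF assms, of "\<lambda>x. g x ^ k"] by (simp add: power_add mult.commute)

lemma sum_atMost_split_first_two:
  fixes f :: "nat \<Rightarrow> 'a::comm_monoid_add"
  shows "1 \<le> p \<Longrightarrow> (\<Sum>k\<le>p. f k) = f 0 + f 1 + (\<Sum>k\<in>{2..p}. f k)"
  by (simp add: atMost_atLeast0 sum.atLeast_Suc_atMost numeral_2_eq_2 add.assoc)

lemma sum_triangle_reindex:
  "(\<Sum>m\<in>{1..<p}. \<Sum>j\<in>{1..<m}. h m j) = (\<Sum>k\<in>{2..p}. \<Sum>i<p - k. h (k + i) (Suc i))"
proof -
  have "(\<Sum>m\<in>{1..<p}. \<Sum>j\<in>{1..<m}. h m j) = (\<Sum>(m, j)\<in>Sigma {1..<p} (\<lambda>m. {1..<m}). h m j)"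
    by (rule sum.Sigma) auto
  also have "\<dots> = (\<Sum>(k, i)\<in>Sigma {2..p} (\<lambda>k. {..<p - k}). h (k + i) (Suc i))"
    by (rule sum.reindex_bij_witness[where i = "\<lambda>(k, i). (k + i, Suc i)"
                                      and j = "\<lambda>(m, j). (m + 1 - j, j - 1)"]) auto
  also have "\<dots> = (\<Sum>k\<in>{2..p}. \<Sum>i<p - k. h (k + i) (Suc i))"
    by (rule sum.Sigma[symmetric]) auto
  finally show ?thesis .
qed

lemma sum_power_coeff_split:
  fixes T :: "'a::comm_ring_1"
  assumes "1 \<le> p"
    and rec: "\<And>m. m \<in> {1..<p} \<Longrightarrow> a m = b (m - 1) + (\<Sum>j\<in>{1..<m}. g (m + 1 - j) (j - 1))"
  shows "(\<Sum>m<p. T ^ (m + 1) * a m) = T * a 0 + T * (\<Sum>m<p - 1. T ^ (m + 1) * b m)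
           + (\<Sum>k\<in>{2..p}. T ^ k * (\<Sum>m<p - k. T ^ (m + 1) * g k m))"
proof -
  have "(\<Sum>m<p. T ^ (m + 1) * a m) = T * a 0 + (\<Sum>m\<in>{1..<p}. T ^ (m + 1) * a m)"
    using assms(1) by (simp add: lessThan_atLeast0 sum.atLeast_Suc_lessThan)
  also have "(\<Sum>m\<in>{1..<p}. T ^ (m + 1) * a m) = (\<Sum>m\<in>{1..<p}. T ^ (m + 1) * b (m - 1))
      + (\<Sum>m\<in>{1..<p}. \<Sum>j\<in>{1..<m}. T ^ (m + 1) * g (m + 1 - j) (j - 1))"
    by (simp add: rec sum.distrib distrib_left sum_distrib_left)
  also have "(\<Sum>m\<in>{1..<p}. T ^ (m + 1) * b (m - 1)) = T * (\<Sum>m<p - 1. T ^ (m + 1) * b m)"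
    unfolding sum_distrib_left
    by (rule sum.reindex_bij_witness[where i = Suc and j = "\<lambda>m. m - 1"]) auto
  also have "(\<Sum>m\<in>{1..<p}. \<Sum>j\<in>{1..<m}. T ^ (m + 1) * g (m + 1 - j) (j - 1))
      = (\<Sum>k\<in>{2..p}. T ^ k * (\<Sum>m<p - k. T ^ (m + 1) * g k m))"
    unfolding sum_triangle_reindex[where p = p and h = "\<lambda>m j. T ^ (m + 1) * g (m + 1 - j) (j - 1)"]
    by (simp add: sum_distrib_left power_add mult_ac)
  finally show ?thesis by (simp add: add.assoc)
qed

locale eigenvalue_perturbation =
  fixes D0 DV :: "'a::complex_hilbert set"
    and H0 V :: "'a \<Rightarrow> 'a"
    and lambda0 :: real
    and E :: "real \<Rightarrow> real"
    and psi :: "real \<Rightarrow> 'a"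
    and n :: nat
    and Pbar0 :: "'a \<Rightarrow> 'a"
    and K :: "nat \<Rightarrow> 'a pop"
    and Es :: "nat \<Rightarrow> complex"
  assumes H0_symmetric: "\<And>x y. x \<in> D0 \<Longrightarrow> y \<in> D0 \<Longrightarrow> cinner y (H0 x) = cinner (H0 y) x"
    and V_symmetric: "\<And>x y. x \<in> DV \<Longrightarrow> y \<in> DV \<Longrightarrow> cinner y (V x) = cinner (V y) x"
    and D0_subset_DV: "D0 \<subseteq> DV"
    and lambda0_pos: "lambda0 > 0"
    and eigenvector: "\<And>l. l \<in> {0..lambda0} \<Longrightarrow> psi l \<in> D0"
    and eigen_equation: "\<And>l. l \<in> {0..lambda0} \<Longrightarrow> H0 (psi l) + l *\<^sub>R V (psi l) = E l *\<^sub>R psi l"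
    and eigenspace_0: "{y \<in> D0. H0 y = E 0 *\<^sub>R y} = range (\<lambda>c. cscale c (psi 0))"
    and psi_lim: "(psi \<longlongrightarrow> psi 0) (at_right 0)"
    and normalization: "\<And>l. l \<in> {0..lambda0} \<Longrightarrow> cinner (psi 0) (psi l) = 1"
    and Pbar0_def: "Pbar0 = (\<lambda>x. x - orth_proj {y \<in> D0. H0 y = E 0 *\<^sub>R y} x)"
    and K0_def: "K 0 = reduced_resolvent D0 H0 (E 0) Pbar0"
    and Km_def: "\<forall>m\<in>{1..n-2}. K m =
                   psum (\<lambda>j. pcomp (K (j - 1))
                                 (pcomp (shift_op DV V (Es (m + 1 - j)) (j = m)) (K 0))) m"
    and E0_def: "Es 0 = complex_of_real (E 0)"
    and E1_def: "Es 1 = cinner (psi 0) (V (psi 0))"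
    and Em_def: "\<forall>m\<in>{2..n}. Es m = - cinner (V (psi 0)) (the (K (m - 2) (V (psi 0))))"
    and dom_K: "\<forall>l\<le>n-2. K l (Pbar0 (V (psi 0))) \<noteq> None"
begin

abbreviation "psi0 \<equiv> psi 0"
abbreviation "E0 \<equiv> E 0"
abbreviation "Vpsi0 \<equiv> V psi0"

definition overlap :: "'a \<Rightarrow> real \<Rightarrow> complex" where
  "overlap z t = cinner z (psi t)"

definition K_coeff :: "nat \<Rightarrow> 'a \<Rightarrow> complex" where
  "K_coeff m z = cinner (the (K m z)) Vpsi0"

definition overlap_error :: "nat \<Rightarrow> 'a \<Rightarrow> real \<Rightarrow> complex" where
  "overlap_error p z t =
     overlap z t - cinner z psi0 + (\<Sum>m<p. complex_of_real t ^ (m + 1) * K_coeff m z)"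

definition energy_error :: "nat \<Rightarrow> real \<Rightarrow> complex" where
  "energy_error p t = complex_of_real (E t) - (\<Sum>k\<le>p. Es k * complex_of_real t ^ k)"

lemma psi0_in_D0: "psi0 \<in> D0"
  using eigenvector lambda0_pos by simp

lemma psi0_normalized: "cinner psi0 psi0 = 1"
  using normalization lambda0_pos by simp

lemma H0_psi0: "H0 psi0 = E0 *\<^sub>R psi0"
  using eigen_equation[of 0] lambda0_pos by simp

lemma Pbar0_eq: "Pbar0 x = x - cscale (cinner psi0 x) psi0"
proof -
  have "orth_proj (range (\<lambda>c. cscale c psi0)) x = cscale (cinner psi0 x) psi0"
    unfolding orth_proj_def
  proof (rule the_equality)
    show "cscale (cinner psi0 x) psi0 \<in> range (\<lambda>c. cscale c psi0) \<and>
      (\<forall>z\<in>range (\<lambda>c. cscale c psi0). cinner z (x - cscale (cinner psi0 x) psi0) = 0)"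
      by (auto simp: cinner_cscale_left cinner_diff_right cinner_cscale_right psi0_normalized)
  next
    fix y assume y: "y \<in> range (\<lambda>c. cscale c psi0) \<and>
      (\<forall>z\<in>range (\<lambda>c. cscale c psi0). cinner z (x - y) = 0)"
    then obtain b where b: "y = cscale b psi0" by auto
    have "psi0 \<in> range (\<lambda>c. cscale c psi0)" by (metis cscale_one rangeI)
    with y have "cinner psi0 (x - y) = 0" by blast
    then show "y = cscale (cinner psi0 x) psi0"
      by (simp add: b cinner_diff_right cinner_cscale_right psi0_normalized)
  qed
  then show ?thesis by (simp add: Pbar0_def eigenspace_0)
qed

lemma cinner_psi0_Pbar0: "cinner psi0 (Pbar0 x) = 0"
  by (simp add: Pbar0_eq cinner_diff_right cinner_cscale_right psi0_normalized)

lemma K0_SomeD: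
  assumes "K 0 x = Some w"
  shows "w \<in> D0" "H0 w - E0 *\<^sub>R w = Pbar0 x" "cinner w psi0 = 0"
proof -
  let ?P = "\<lambda>chi. chi \<in> D0 \<and> Pbar0 chi = chi \<and> H0 chi - E0 *\<^sub>R chi = Pbar0 x"
  have unique: "\<exists>!chi. ?P chi" and w: "w = (THE chi. ?P chi)"
    using assms unfolding K0_def reduced_resolvent_def by (auto split: if_splits)
  have "?P w" unfolding w by (rule theI'[OF unique])
  then show "w \<in> D0" "H0 w - E0 *\<^sub>R w = Pbar0 x" by auto
  from \<open>?P w\<close> have "cinner psi0 w = 0" using cinner_psi0_Pbar0[of w] by simp
  then show "cinner w psi0 = 0" using cinner_commute[of w psi0] by simp
qed

lemma K_cong:
  assumes "K 0 x = K 0 y" "m \<le> n - 2"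
  shows "K m x = K m y"
proof (cases "m = 0")
  case True
  then show ?thesis using assms by simp
next
  case False
  then have "m \<in> {1..n-2}" using assms by auto
  then show ?thesis using assms(1) Km_def by (simp add: psum_def pcomp_def)
qed

lemma Pbar0_idem: "Pbar0 (Pbar0 x) = Pbar0 x"
  by (simp add: Pbar0_eq[of "Pbar0 x"] cinner_psi0_Pbar0)

lemma K_defined_Vpsi0:
  assumes "m \<le> n - 2"
  shows "K m Vpsi0 \<noteq> None"
proof -
  have "K m (Pbar0 Vpsi0) = K m Vpsi0"
    by (rule K_cong) (simp_all add: assms K0_def reduced_resolvent_def Pbar0_idem)
  moreover have "K m (Pbar0 Vpsi0) \<noteq> None" using dom_K assms by blast
  ultimately show ?thesis by simp
qed

lemma overlap_tendsto: "(overlap z \<longlongrightarrow> cinner z psi0) (at_right 0)"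
proof -
  have "((\<lambda>t. psi t - psi0) \<longlongrightarrow> 0) (at_right 0)"
    using tendsto_diff[OF psi_lim tendsto_const[of psi0]] by simp
  then have "((\<lambda>t. cinner z (psi t - psi0)) \<longlongrightarrow> 0) (at_right 0)"
    by (rule tendsto_0_le[where K = "norm z"])
       (auto intro!: always_eventually simp: norm_cinner_le mult.commute)
  then have "((\<lambda>t. cinner z (psi t - psi0) + cinner z psi0) \<longlongrightarrow> 0 + cinner z psi0) (at_right 0)"
    by (intro tendsto_add tendsto_const)
  then show ?thesis by (simp add: overlap_def[abs_def] cinner_diff_right)
qed

lemma energy_difference:
  assumes t: "t \<in> {0..lambda0}"
  shows "complex_of_real (E t - E0) = complex_of_real t * overlap Vpsi0 t"
proof -
  have "psi t \<in> DV" using eigenvector[OF t] D0_subset_DV by auto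
  then have "cinner psi0 (V (psi t)) = overlap Vpsi0 t"
    using V_symmetric psi0_in_D0 D0_subset_DV by (auto simp: overlap_def)
  moreover have "cinner psi0 (H0 (psi t)) = E0"
    using H0_symmetric[OF eigenvector[OF t] psi0_in_D0] normalization[OF t]
    by (simp add: H0_psi0 cinner_scaleR_left)
  moreover have "cinner psi0 (H0 (psi t) + t *\<^sub>R V (psi t)) = E t"
    using normalization[OF t] by (simp add: eigen_equation[OF t] cinner_scaleR_right)
  ultimately have "E t = E0 + complex_of_real t * overlap Vpsi0 t"
    by (simp add: cinner_add_right cinner_scaleR_right)
  then show ?thesis by simp
qed

lemma overlap_reduced_resolvent:
  assumes t: "t \<in> {0..lambda0}" and Kz: "K 0 z = Some w"
  shows "overlap z t = cinner z psi0 + complex_of_real (E t - E0) * overlap w t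
                         - complex_of_real t * overlap (V w) t"
proof -
  have psi_t: "psi t \<in> D0" using eigenvector[OF t] .
  have w: "w \<in> D0" using K0_SomeD(1)[OF Kz] .
  have "overlap z t = cinner (Pbar0 z) (psi t) + cinner z psi0"
    by (simp add: overlap_def Pbar0_eq cinner_diff_left cinner_cscale_left normalization[OF t]
                  cinner_commute[of psi0 z])
  also have "cinner (Pbar0 z) (psi t) = cinner w (H0 (psi t)) - E0 * overlap w t"
    by (simp add: K0_SomeD(2)[OF Kz, symmetric] cinner_diff_left cinner_scaleR_left
                  H0_symmetric[OF psi_t w] overlap_def)
  also have "H0 (psi t) = E t *\<^sub>R psi t - t *\<^sub>R V (psi t)"
    using eigen_equation[OF t] by (simp add: algebra_simps)
  also have "cinner w (E t *\<^sub>R psi t - t *\<^sub>R V (psi t)) = E t * overlap w t - t * overlap (V w) t"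
    using V_symmetric[of "psi t" w] D0_subset_DV psi_t w
    by (auto simp: cinner_diff_right cinner_scaleR_right overlap_def)
  finally show ?thesis by (simp add: algebra_simps)
qed

lemma cinner_Vpsi0_psi0: "cinner Vpsi0 psi0 = Es 1"
  using V_symmetric[of psi0 psi0] psi0_in_D0 D0_subset_DV unfolding E1_def by auto

lemma Es1_real: "cnj (Es 1) = Es 1"
proof -
  have "cnj (Es 1) = cinner Vpsi0 psi0" unfolding E1_def by (rule cinner_commute[symmetric])
  then show ?thesis by (simp add: cinner_Vpsi0_psi0)
qed

lemma K_recursion:
  assumes m: "m \<in> {1..n-2}" and Kz: "K 0 z = Some w" and defined: "K m z \<noteq> None"
  defines "y \<equiv> cscale (Es 1) w - V w"
  shows "K (m - 1) y \<noteq> None"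
    and "\<And>j. j \<in> {1..<m} \<Longrightarrow> K (j - 1) (cscale (Es (m + 1 - j)) w) \<noteq> None"
    and "K_coeff m z = K_coeff (m - 1) y
                       + (\<Sum>j\<in>{1..<m}. K_coeff (j - 1) (cscale (Es (m + 1 - j)) w))"
proof -
  define F where "F j = (if j = m then y else cscale (Es (m + 1 - j)) w)" for j
  have "w \<in> DV" using K0_SomeD(1)[OF Kz] D0_subset_DV by auto
  then have "pcomp (K (j - 1)) (pcomp (shift_op DV V (Es (m + 1 - j)) (j = m)) (K 0)) z
               = K (j - 1) (F j)" for j
    by (simp add: Kz F_def y_def pcomp_def shift_op_def)
  with Km_def m have "K m z = psum (\<lambda>j _. K (j - 1) (F j)) m z"
    by (simp add: psum_def)
  with defined have all: "\<forall>j\<in>{1..m}. K (j - 1) (F j) \<noteq> None"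
    and sum: "the (K m z) = (\<Sum>j=1..m. the (K (j - 1) (F j)))"
    by (auto simp: psum_def split: if_splits)
  show "K (m - 1) y \<noteq> None" using bspec[OF all, of m] m by (simp add: F_def)
  show "K (j - 1) (cscale (Es (m + 1 - j)) w) \<noteq> None" if "j \<in> {1..<m}" for j
    using bspec[OF all, of j] that by (simp add: F_def)
  have "K_coeff m z = (\<Sum>j\<in>{1..<m}. K_coeff (j - 1) (F j)) + K_coeff (m - 1) (F m)"
    using m by (simp add: K_coeff_def sum cinner_add_left cinner_sum_left sum.atLeastLessThan_Suc
                          atLeastLessThanSuc_atLeastAtMost[symmetric])
  then show "K_coeff m z = K_coeff (m - 1) y
                 + (\<Sum>j\<in>{1..<m}. K_coeff (j - 1) (cscale (Es (m + 1 - j)) w))"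
    by (simp add: F_def)
qed

lemma overlap_error_step:
  assumes t: "t \<in> {0..lambda0}" and Kz: "K 0 z = Some w" and p: "1 \<le> p"
    and y_eq: "y = cscale (Es 1) w - V w"
    and rec: "\<And>m. m \<in> {1..<p} \<Longrightarrow> K_coeff m z = K_coeff (m - 1) y
                       + (\<Sum>j\<in>{1..<m}. K_coeff (j - 1) (cscale (Es (m + 1 - j)) w))"
  shows "overlap_error p z t = overlap w t * cnj (energy_error p t)
           + complex_of_real t * overlap_error (p - 1) y t
           + (\<Sum>k\<in>{2..p}. complex_of_real t ^ k * overlap_error (p - k) (cscale (Es k) w) t)"
proof -
  let ?T = "complex_of_real t" and ?D = "complex_of_real (E t - E0)"
  let ?x = "\<lambda>k. cscale (Es k) w"
  define B where "B = (\<Sum>m<p - 1. ?T ^ (m + 1) * K_coeff m y)"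
  define G where "G = (\<Sum>k\<in>{2..p}. ?T ^ k * (\<Sum>m<p - k. ?T ^ (m + 1) * K_coeff m (?x k)))"
  define S where "S = (\<Sum>k\<in>{2..p}. cnj (Es k) * ?T ^ k)"
  have w: "w \<in> D0" "cinner w psi0 = 0" using K0_SomeD[OF Kz] by simp_all
  have "K_coeff 0 z = cinner (V w) psi0"
    using V_symmetric[of psi0 w] w psi0_in_D0 D0_subset_DV by (auto simp: K_coeff_def Kz)
  then have y: "overlap y t - cinner y psi0 = cnj (Es 1) * overlap w t - overlap (V w) t + K_coeff 0 z"
    by (simp add: y_eq overlap_def cinner_diff_left cinner_cscale_left w(2))
  have x: "(\<Sum>k\<in>{2..p}. ?T ^ k * (overlap (?x k) t - cinner (?x k) psi0
                                     + (\<Sum>m<p - k. ?T ^ (m + 1) * K_coeff m (?x k))))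
           = overlap w t * S + G"
    using w(2) by (simp add: S_def G_def overlap_def cinner_cscale_left sum.distrib
                             distrib_left sum_distrib_left mult_ac)
  have energy: "cnj (energy_error p t) = ?D - cnj (Es 1) * ?T - S"
    unfolding energy_error_def sum_atMost_split_first_two[OF p] by (simp add: E0_def S_def)
  have "(\<Sum>m<p. ?T ^ (m + 1) * K_coeff m z) = ?T * K_coeff 0 z + ?T * B + G"
    unfolding B_def G_def by (rule sum_power_coeff_split[OF p rec])
  then have "overlap_error p z t
               = ?D * overlap w t - ?T * overlap (V w) t + ?T * K_coeff 0 z + ?T * B + G"
    by (simp add: overlap_error_def overlap_reduced_resolvent[OF t Kz])
  also have "\<dots> = overlap w t * cnj (energy_error p t)
                   + ?T * (overlap y t - cinner y psi0 + B) + (overlap w t * S + G)"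
    unfolding energy y by (simp add: algebra_simps)
  finally show ?thesis unfolding x[symmetric] B_def by (simp add: overlap_error_def)
qed

lemma eventually_parameter_range: "eventually (\<lambda>t. t \<in> {0<..<lambda0}) (at_right 0)"
  using eventually_at_right_real[OF lambda0_pos] .

lemma overlap_error_smallo_step:
  assumes p: "1 \<le> p" and Kz: "K 0 z = Some w" and y: "y = cscale (Es 1) w - V w"
    and rec: "\<And>m. m \<in> {1..<p} \<Longrightarrow> K_coeff m z = K_coeff (m - 1) y
                       + (\<Sum>j\<in>{1..<m}. K_coeff (j - 1) (cscale (Es (m + 1 - j)) w))"
    and energy: "energy_error p \<in> o[at_right 0](\<lambda>t. complex_of_real t ^ p)"
    and y_small: "overlap_error (p - 1) y \<in> o[at_right 0](\<lambda>t. complex_of_real t ^ (p - 1))"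
    and x_small: "\<And>k. k \<in> {2..p} \<Longrightarrow>
       overlap_error (p - k) (cscale (Es k) w) \<in> o[at_right 0](\<lambda>t. complex_of_real t ^ (p - k))"
  shows "overlap_error p z \<in> o[at_right 0](\<lambda>t. complex_of_real t ^ p)"
proof -
  let ?x = "\<lambda>k. cscale (Es k) w"
  have w_term: "(\<lambda>t. overlap w t * cnj (energy_error p t))
                  \<in> o[at_right 0](\<lambda>t. complex_of_real t ^ p)"
    by (rule smallo_mult_tendsto[OF smallo_cnj[OF energy] overlap_tendsto])
  have "p - 1 + 1 = p" using p by simp
  with smallo_power_mult[OF y_small, of 1]
  have y_term: "(\<lambda>t. complex_of_real t * overlap_error (p - 1) y t)
                  \<in> o[at_right 0](\<lambda>t. complex_of_real t ^ p)"
    by simp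
  have "(\<lambda>t. complex_of_real t ^ k * overlap_error (p - k) (?x k) t)
          \<in> o[at_right 0](\<lambda>t. complex_of_real t ^ p)" if k: "k \<in> {2..p}" for k
    using smallo_power_mult[OF x_small[OF k], of k] k by simp
  then have x_terms: "(\<lambda>t. \<Sum>k\<in>{2..p}. complex_of_real t ^ k * overlap_error (p - k) (?x k) t)
                        \<in> o[at_right 0](\<lambda>t. complex_of_real t ^ p)"
    by (rule big_sum_in_smallo)
  have "eventually (\<lambda>t. overlap w t * cnj (energy_error p t)
          + complex_of_real t * overlap_error (p - 1) y t
          + (\<Sum>k\<in>{2..p}. complex_of_real t ^ k * overlap_error (p - k) (?x k) t)
        = overlap_error p z t) (at_right 0)"
    using eventually_parameter_range
  proof eventually_elim
    case (elim t)
    then have "t \<in> {0..lambda0}" by simp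
    from overlap_error_step[OF this Kz p y rec] show ?case by simp
  qed
  from landau_o.small.in_cong[OF this]
  show ?thesis using sum_in_smallo(1)[OF sum_in_smallo(1)[OF w_term y_term] x_terms] by simp
qed

lemma overlap_error_smallo:
  assumes "p \<le> n - 1"
    and "\<And>q. q \<in> {1..p} \<Longrightarrow> energy_error q \<in> o[at_right 0](\<lambda>t. complex_of_real t ^ q)"
    and "\<And>m. m < p \<Longrightarrow> K m z \<noteq> None"
  shows "overlap_error p z \<in> o[at_right 0](\<lambda>t. complex_of_real t ^ p)"
  using assms
proof (induction p arbitrary: z rule: less_induct)
  case (less p z)
  show ?case
  proof (cases "p = 0")
    case True
    then show ?thesis
      using tendsto_imp_diff_smallo_1[OF overlap_tendsto] by (simp add: overlap_error_def[abs_def])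
  next
    case False
    then have p: "1 \<le> p" by simp
    obtain w where Kz: "K 0 z = Some w" using less.prems(3) p by fastforce
    define y where "y = cscale (Es 1) w - V w"
    have m_range: "m \<in> {1..n-2}" if "m \<in> {1..<p}" for m using that less.prems(1) by auto
    show ?thesis
    proof (rule overlap_error_smallo_step[OF p Kz y_def])
      fix m assume "m \<in> {1..<p}"
      with K_recursion(3)[OF m_range[OF this] Kz] less.prems(3)
      show "K_coeff m z = K_coeff (m - 1) y
              + (\<Sum>j\<in>{1..<m}. K_coeff (j - 1) (cscale (Es (m + 1 - j)) w))"
        by (simp add: y_def)
    next
      show "overlap_error (p - 1) y \<in> o[at_right 0](\<lambda>t. complex_of_real t ^ (p - 1))"
      proof (rule less.IH)
        fix m assume "m < p - 1"
        then have m: "Suc m \<in> {1..<p}" by simp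
        with K_recursion(1)[OF m_range[OF m] Kz less.prems(3)[of "Suc m"]]
        show "K m y \<noteq> None" by (simp add: y_def)
      qed (use less.prems p in auto)
    next
      fix k assume k: "k \<in> {2..p}"
      show "overlap_error (p - k) (cscale (Es k) w)
              \<in> o[at_right 0](\<lambda>t. complex_of_real t ^ (p - k))"
      proof (rule less.IH)
        fix m assume "m < p - k"
        then have mk: "m + k \<in> {1..<p}" and "Suc m \<in> {1..<m + k}" using k by auto
        from K_recursion(2)[OF m_range[OF mk] Kz less.prems(3) this(2)] mk
        show "K m (cscale (Es k) w) \<noteq> None" by simp
      qed (use less.prems k in auto)
    qed (use less.prems p in simp)
  qed
qed

lemma energy_error_eq_overlap_error:
  assumes t: "t \<in> {0<..<lambda0}" and p: "1 \<le> p" "p \<le> n"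
  shows "energy_error p t = complex_of_real t ^ 1 * cnj (overlap_error (p - 1) Vpsi0 t)"
proof -
  let ?T = "complex_of_real t"
  have shift: "complex_of_real (E t - E0) = ?T * overlap Vpsi0 t"
    using energy_difference t by simp
  then have "overlap Vpsi0 t = complex_of_real ((E t - E0) / t)"
    using t by (simp add: field_simps)
  then have real: "cnj (overlap Vpsi0 t) = overlap Vpsi0 t" by simp
  have coeff: "cnj (K_coeff m Vpsi0) = - Es (m + 2)" if "m < p - 1" for m
  proof -
    have "m + 2 \<in> {2..n}" using that p by auto
    with Em_def cinner_commute[of Vpsi0 "the (K m Vpsi0)"] show ?thesis
      by (simp add: K_coeff_def)
  qed
  have "(\<Sum>k\<in>{2..p}. g k) = (\<Sum>m<p - 1. g (m + 2))" for g :: "nat \<Rightarrow> complex"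
    by (rule sum.reindex_bij_witness[where i = "\<lambda>m. m + 2" and j = "\<lambda>k. k - 2"])
       (auto simp: Suc_diff_Suc numeral_2_eq_2)
  then have "energy_error p t
               = ?T * overlap Vpsi0 t - Es 1 * ?T - (\<Sum>m<p - 1. Es (m + 2) * ?T ^ (m + 2))"
    using shift by (simp add: energy_error_def sum_atMost_split_first_two[OF p(1)] E0_def)
  also have "\<dots> = ?T * (overlap Vpsi0 t - Es 1 - (\<Sum>m<p - 1. ?T ^ (m + 1) * Es (m + 2)))"
    by (simp add: algebra_simps sum_distrib_left)
  also have "(\<Sum>m<p - 1. ?T ^ (m + 1) * Es (m + 2))
               = - cnj (\<Sum>m<p - 1. ?T ^ (m + 1) * K_coeff m Vpsi0)"
    by (simp add: coeff sum_negf[symmetric])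
  finally show ?thesis
    using Es1_real by (simp add: overlap_error_def real cinner_Vpsi0_psi0)
qed

lemma energy_error_smallo:
  "p \<in> {1..n} \<Longrightarrow> energy_error p \<in> o[at_right 0](\<lambda>t. complex_of_real t ^ p)"
proof (induction p rule: less_induct)
  case (less p)
  have "overlap_error (p - 1) Vpsi0 \<in> o[at_right 0](\<lambda>t. complex_of_real t ^ (p - 1))"
    using less K_defined_Vpsi0 by (intro overlap_error_smallo) auto
  then have "(\<lambda>t. complex_of_real t ^ 1 * cnj (overlap_error (p - 1) Vpsi0 t))
               \<in> o[at_right 0](\<lambda>t. complex_of_real t ^ (p - 1 + 1))"
    by (rule smallo_power_mult[OF smallo_cnj])
  moreover have "p - 1 + 1 = p" using less.prems by simp
  moreover have "eventually (\<lambda>t. complex_of_real t ^ 1 * cnj (overlap_error (p - 1) Vpsi0 t)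
                                = energy_error p t) (at_right 0)"
    using eventually_parameter_range
    by eventually_elim (use energy_error_eq_overlap_error less.prems in auto)
  ultimately show ?case using landau_o.small.in_cong by fastforce
qed

end

theorem mainTheorem6:
  fixes D0 DV :: "'a::complex_hilbert set"
    and H0 V :: "'a \<Rightarrow> 'a"
    and lambda0 :: real
    and E :: "real \<Rightarrow> real"
    and psi :: "real \<Rightarrow> 'a"
    and n :: nat
    and Pbar0 :: "'a \<Rightarrow> 'a"
    and K :: "nat \<Rightarrow> 'a pop"
    and Es :: "nat \<Rightarrow> complex"
  assumes H0_sa: "self_adjoint D0 H0"
    and V_sa: "self_adjoint DV V"
    and H0_below: "bounded_below D0 H0"
    and V_rel: "relatively_bounded DV V D0 H0"
    and lambda0_pos: "lambda0 > 0"
    and eigen: "\<forall>l\<in>{0..lambda0}.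
                  simple_eigen D0 (\<lambda>x. H0 x + l *\<^sub>R V x) (E l) (psi l)"
    and psi_lim: "(psi \<longlongrightarrow> psi 0) (at_right 0)"
    and E_lim: "(E \<longlongrightarrow> E 0) (at_right 0)"
    and normalization: "\<forall>l\<in>{0..lambda0}. cinner (psi 0) (psi l) = 1"
    and n_ge: "n \<ge> 2"
    and Pbar0_def: "Pbar0 = (\<lambda>x. x - orth_proj {y \<in> D0. H0 y = E 0 *\<^sub>R y} x)"
    and K0_def: "K 0 = reduced_resolvent D0 H0 (E 0) Pbar0"
    and Km_def: "\<forall>m\<in>{1..n-2}. K m =
                   psum (\<lambda>j. pcomp (K (j - 1))
                                 (pcomp (shift_op DV V (Es (m + 1 - j)) (j = m)) (K 0))) m"
    and E0_def: "Es 0 = complex_of_real (E 0)"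
    and E1_def: "Es 1 = cinner (psi 0) (V (psi 0))"
    and Em_def: "\<forall>m\<in>{2..n}. Es m = - cinner (V (psi 0)) (the (K (m - 2) (V (psi 0))))"
    and dom_K: "\<forall>l\<le>n-2. K l (Pbar0 (V (psi 0))) \<noteq> None"
  shows "\<forall>m\<in>{1..n}.
           ((\<lambda>l. (complex_of_real (E l) - (\<Sum>k\<le>m. Es k * complex_of_real l ^ k))
                   / complex_of_real l ^ m) \<longlongrightarrow> 0) (at_right 0)"
proof -
  have "simple_eigen D0 H0 (E 0) (psi 0)"
    using bspec[OF eigen, of 0] lambda0_pos by simp
  then have eigenspace_0: "{y \<in> D0. H0 y = E 0 *\<^sub>R y} = range (\<lambda>c. cscale c (psi 0))"
    by (simp add: simple_eigen_def)
  interpret eigenvalue_perturbation D0 DV H0 V lambda0 E psi n Pbar0 K Es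
  proof
    show "\<And>x y. x \<in> D0 \<Longrightarrow> y \<in> D0 \<Longrightarrow> cinner y (H0 x) = cinner (H0 y) x"
      by (rule self_adjoint_symmetric[OF H0_sa])
    show "\<And>x y. x \<in> DV \<Longrightarrow> y \<in> DV \<Longrightarrow> cinner y (V x) = cinner (V y) x"
      by (rule self_adjoint_symmetric[OF V_sa])
    show "D0 \<subseteq> DV" using V_rel by (simp add: relatively_bounded_def)
    show "\<And>l. l \<in> {0..lambda0} \<Longrightarrow> psi l \<in> D0"
      and "\<And>l. l \<in> {0..lambda0} \<Longrightarrow> H0 (psi l) + l *\<^sub>R V (psi l) = E l *\<^sub>R psi l"
      using eigen by (simp_all add: simple_eigen_def)
  qed (fact | use normalization in blast)+
  show ?thesis
  proof
    fix m assume "m \<in> {1..n}"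
    from smalloD_tendsto[OF energy_error_smallo[OF this]]
    show "((\<lambda>l. (complex_of_real (E l) - (\<Sum>k\<le>m. Es k * complex_of_real l ^ k))
                   / complex_of_real l ^ m) \<longlongrightarrow> 0) (at_right 0)"
      by (simp add: energy_error_def)
  qed
qed


end
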